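(* Let $(M,\eta,\xi,\phi,g)$ be a non-K-contact contact metric manifold satisfying the weak $(\kappa,\mu)$ condition $R(X,\xi)\xi=\kappa(X-\eta(X)\xi)+\mu hX$ for real constants $\kappa,\mu$, with Boeckx invariant $I_M=\frac{1-\mu/2}{\sqrt{1-\kappa}}$ satisfying $|I_M|<1$ (so that $1-\kappa-(1-\frac{\mu}{2})^2>0$). Define $$\phi_1=\frac{1}{\sqrt{1-\kappa-(1-\frac{\mu}{2})^2}}\cdot\frac{1}{2\sqrt{1-\kappa}}\big((2-\mu)\phi h+2(1-\kappa)\phi\big).$$ Then $\phi_1^2=-I+\eta\otimes\xi$ and $$h_1:=\tfrac12L_\xi\phi_1=\sqrt{1-I_M^2}\,h .$$
   Context: A contact metric structure $(M,\eta,\xi,\phi,g)$ consists of a contact form $\eta$, its Reeb field $\xi$, a Riemannian metric $g$ and an endomorphism field $\phi$ with $\eta(\xi)=1$, $\phi^2=-\mathrm{Id}+\eta\otimes\xi$, $\phi\xi=0$, $d\eta=2g(\cdot,\phi\cdot)$. $h=\frac12L_\xi\phi$ ($L_\xi$ the Lie derivative along $\xi$); K-contact means $h=0$. $R(X,Y)=[\nabla_X,\nabla_Y]-\nabla_{[X,Y]}$ for the Levi-Civita connection of $g$. For a non-K-contact weak $(\kappa,\mu)$ space, $\kappa<1$. *)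

theory Defs
  imports "HOL-Analysis.Analysis"
begin

text \<open>Local (chart) model: the manifold is an open set U in real^'n, tensor fields are
  written in the coordinates of that chart. Vector fields are maps real^'n => real^'n,
  a 1-form eta is represented by its component vector (eta(X) = eta p \<bullet> X),
  (1,1)-tensor fields phi, h by matrix fields, the metric g by a matrix field
  (g(X,Y) = X \<bullet> (g p *v Y)).\<close>

fun Ck_on :: "nat \<Rightarrow> 'a::real_normed_vector set \<Rightarrow> ('a \<Rightarrow> 'b::real_normed_vector) \<Rightarrow> bool" where
  "Ck_on 0 U f = continuous_on U f"
| "Ck_on (Suc k) U f = ((\<forall>x\<in>U. f differentiable (at x)) \<and>
      (\<forall>v. Ck_on k U (\<lambda>x. frechet_derivative f (at x) v)))"

definition smooth_on :: "'a::real_normed_vector set \<Rightarrow> ('a \<Rightarrow> 'b::real_normed_vector) \<Rightarrow> bool" where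
  "smooth_on U f \<longleftrightarrow> (\<forall>k. Ck_on k U f)"

definition gform :: "(real^'n \<Rightarrow> real^'n^'n) \<Rightarrow> real^'n \<Rightarrow> real^'n \<Rightarrow> real^'n \<Rightarrow> real" where
  "gform g p v w = v \<bullet> (g p *v w)"

text \<open>Christoffel term of the Levi-Civita connection:
  g(Gamma(v,w),z) = 1/2 ((D_v g)(w,z) + (D_w g)(v,z) - (D_z g)(v,w)).\<close>
definition christoffel :: "(real^'n \<Rightarrow> real^'n^'n) \<Rightarrow> real^'n \<Rightarrow> real^'n \<Rightarrow> real^'n \<Rightarrow> real^'n" where
  "christoffel g p v w = matrix_inv (g p) *v
     (\<chi> k. (1/2) * (w \<bullet> (frechet_derivative g (at p) v *v axis k 1)
                  + v \<bullet> (frechet_derivative g (at p) w *v axis k 1)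
                  - v \<bullet> (frechet_derivative g (at p) (axis k 1) *v w)))"

definition nabla :: "(real^'n \<Rightarrow> real^'n^'n) \<Rightarrow> (real^'n \<Rightarrow> real^'n) \<Rightarrow> (real^'n \<Rightarrow> real^'n) \<Rightarrow> real^'n \<Rightarrow> real^'n" where
  "nabla g X Y p = frechet_derivative Y (at p) (X p) + christoffel g p (X p) (Y p)"

definition lie_bracket :: "(real^'n \<Rightarrow> real^'n) \<Rightarrow> (real^'n \<Rightarrow> real^'n) \<Rightarrow> real^'n \<Rightarrow> real^'n" where
  "lie_bracket X Y p = frechet_derivative Y (at p) (X p) - frechet_derivative X (at p) (Y p)"

definition curv :: "(real^'n \<Rightarrow> real^'n^'n) \<Rightarrow> (real^'n \<Rightarrow> real^'n) \<Rightarrow> (real^'n \<Rightarrow> real^'n) \<Rightarrow> (real^'n \<Rightarrow> real^'n) \<Rightarrow> real^'n \<Rightarrow> real^'n" where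
  "curv g X Y Z p = nabla g X (nabla g Y Z) p - nabla g Y (nabla g X Z) p - nabla g (lie_bracket X Y) Z p"

definition jac :: "(real^'n \<Rightarrow> real^'n) \<Rightarrow> real^'n \<Rightarrow> real^'n^'n" where
  "jac X p = matrix (frechet_derivative X (at p))"

text \<open>Lie derivative of a (1,1)-tensor field A along xi, in coordinates:
  (L_xi A) X = [xi, A X] - A [xi, X].\<close>
definition lie_tensor :: "(real^'n \<Rightarrow> real^'n) \<Rightarrow> (real^'n \<Rightarrow> real^'n^'n) \<Rightarrow> real^'n \<Rightarrow> real^'n^'n" where
  "lie_tensor xi A p = frechet_derivative A (at p) (xi p) - jac xi p ** A p + A p ** jac xi p"

text \<open>d eta(v,w) for constant vectors v,w (convention d eta(X,Y) = X eta(Y) - Y eta(X) - eta([X,Y])).\<close>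
definition d_form :: "(real^'n \<Rightarrow> real^'n) \<Rightarrow> real^'n \<Rightarrow> real^'n \<Rightarrow> real^'n \<Rightarrow> real" where
  "d_form eta p v w = frechet_derivative eta (at p) v \<bullet> w - frechet_derivative eta (at p) w \<bullet> v"

definition hten :: "(real^'n \<Rightarrow> real^'n) \<Rightarrow> (real^'n \<Rightarrow> real^'n^'n) \<Rightarrow> real^'n \<Rightarrow> real^'n^'n" where
  "hten xi phi p = (1/2) *\<^sub>R lie_tensor xi phi p"

definition contact_metric_on :: "(real^'n) set \<Rightarrow> (real^'n \<Rightarrow> real^'n) \<Rightarrow> (real^'n \<Rightarrow> real^'n)
    \<Rightarrow> (real^'n \<Rightarrow> real^'n^'n) \<Rightarrow> (real^'n \<Rightarrow> real^'n^'n) \<Rightarrow> bool" where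
  "contact_metric_on U eta xi phi g \<longleftrightarrow>
     open U \<and> smooth_on U eta \<and> smooth_on U xi \<and> smooth_on U phi \<and> smooth_on U g \<and>
     (\<forall>p\<in>U.
        transpose (g p) = g p \<and>
        (\<forall>v. v \<noteq> 0 \<longrightarrow> gform g p v v > 0) \<and>
        eta p \<bullet> xi p = 1 \<and>
        (\<forall>v. d_form eta p (xi p) v = 0) \<and>
        (\<forall>v. phi p *v (phi p *v v) = - v + (eta p \<bullet> v) *\<^sub>R xi p) \<and>
        phi p *v xi p = 0 \<and>
        (\<forall>v. gform g p v (xi p) = eta p \<bullet> v) \<and>
        (\<forall>v w. gform g p (phi p *v v) (phi p *v w) = gform g p v w - (eta p \<bullet> v) * (eta p \<bullet> w)) \<and>
        (\<forall>v w. d_form eta p v w = 2 * gform g p v (phi p *v w)))"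

definition weak_kappa_mu :: "(real^'n) set \<Rightarrow> (real^'n \<Rightarrow> real^'n) \<Rightarrow> (real^'n \<Rightarrow> real^'n)
    \<Rightarrow> (real^'n \<Rightarrow> real^'n^'n) \<Rightarrow> (real^'n \<Rightarrow> real^'n^'n) \<Rightarrow> real \<Rightarrow> real \<Rightarrow> bool" where
  "weak_kappa_mu U eta xi phi g \<kappa> \<mu> \<longleftrightarrow>
     (\<forall>X. smooth_on U X \<longrightarrow> (\<forall>p\<in>U.
        curv g X xi xi p = \<kappa> *\<^sub>R (X p - (eta p \<bullet> X p) *\<^sub>R xi p) + \<mu> *\<^sub>R (hten xi phi p *v X p)))"

end

theory Submission
  imports Defs
begin

(* In the chart, the Koszul formula together with L_xi g = -2 g(., phi h .) gives
   nabla_v xi = - phi v - phi h v. As nabla_xi xi = 0, the Jacobi operator R(., xi) xi equals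
   - L_xi A - A^2 for A = - phi - phi h, so the weak (kappa, mu) condition becomes a linear
   equation for phi (L_xi h) in terms of phi^2, h and h^2. Taking the Lie derivative of
   phi h + h phi = 0 then gives h^2 = (kappa - 1) phi^2 and
   L_xi h = 2 (1 - kappa) phi + (2 - mu) phi h,
   so phi1 is c L_xi h for the constant c of the statement. Consequently
   phi1^2 = 4 c^2 (1 - kappa) (1 - kappa - (1 - mu/2)^2) phi^2 = phi^2, and
   L_xi (L_xi h) = (2 - mu) (2 h^2 + phi L_xi h) + 4 (1 - kappa) h = 4 (1 - kappa - (1 - mu/2)^2) h,
   which after normalisation is 2 sqrt (1 - I^2) h. The normalisation needs kappa < 1, which is
   where non-K-contactness enters: g(h v, h v) = (1 - kappa) g(phi v, phi v). *)

section \<open>Smooth maps and symmetry of second derivatives\<close>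

abbreviation fderiv :: "('a::real_normed_vector \<Rightarrow> 'b::real_normed_vector) \<Rightarrow> 'a \<Rightarrow> 'a \<Rightarrow> 'b" where
  "fderiv f x \<equiv> frechet_derivative f (at x)"

lemma smooth_on_has_derivative:
  assumes "smooth_on U f" "x \<in> U"
  shows "(f has_derivative fderiv f x) (at x)"
proof -
  have "Ck_on (Suc 0) U f" using assms(1) unfolding smooth_on_def by blast
  then show ?thesis using assms(2) by (simp add: frechet_derivative_works)
qed

lemma smooth_on_differentiable: "smooth_on U f \<Longrightarrow> x \<in> U \<Longrightarrow> f differentiable (at x)"
  using smooth_on_has_derivative differentiable_def by blast

lemma linear_fderiv: "smooth_on U f \<Longrightarrow> x \<in> U \<Longrightarrow> linear (fderiv f x)"
  using smooth_on_has_derivative has_derivative_linear by blast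

lemma smooth_on_fderiv: "smooth_on U f \<Longrightarrow> smooth_on U (\<lambda>x. fderiv f x v)"
  unfolding smooth_on_def by (metis Ck_on.simps(2))

lemma smooth_on_imp_continuous_on: "smooth_on U f \<Longrightarrow> continuous_on U f"
  unfolding smooth_on_def by (metis Ck_on.simps(1))

lemma smooth_on_const: "smooth_on U (\<lambda>x. c)"
proof -
  have "Ck_on k U (\<lambda>x. c)" for k c
    by (induction k arbitrary: c) auto
  then show ?thesis unfolding smooth_on_def by blast
qed

lemma fderiv_transform_open:
  assumes "open U" "x \<in> U" "\<And>y. y \<in> U \<Longrightarrow> f y = g y" "(g has_derivative g') (at x)"
  shows "fderiv f x = g'"
  using has_derivative_transform_within_open[OF assms(4) assms(1) assms(2), of f] assms(3)
  by (metis frechet_derivative_at)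

lemma has_derivative_zero_if_constant_on_open:
  assumes "open U" "x \<in> U" "\<And>y. y \<in> U \<Longrightarrow> f y = c" "(f has_derivative f') (at x)"
  shows "f' v = 0"
proof -
  have "fderiv f x = (\<lambda>_. 0)"
    using fderiv_transform_open[OF assms(1,2), of f "\<lambda>_. c"] assms(3) by simp
  then show ?thesis using frechet_derivative_at[OF assms(4)] by simp
qed

lemma has_field_derivative_along_line:
  fixes f :: "'a::real_normed_vector \<Rightarrow> real"
  assumes "(f has_derivative f') (at (x + a *\<^sub>R v))"
  shows "((\<lambda>a. f (x + a *\<^sub>R v)) has_field_derivative f' v) (at a)"
proof -
  have "((\<lambda>a. x + a *\<^sub>R v) has_derivative (\<lambda>h. h *\<^sub>R v)) (at a)"
    by (auto intro!: derivative_eq_intros)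
  from has_derivative_compose[OF this assms]
  have "((\<lambda>a. f (x + a *\<^sub>R v)) has_derivative (\<lambda>h. f' (h *\<^sub>R v))) (at a)" .
  moreover have "(\<lambda>h. f' (h *\<^sub>R v)) = (*) (f' v)"
    using has_derivative_linear[OF assms] by (auto simp: linear_scale)
  ultimately show ?thesis by (simp add: has_field_derivative_def)
qed

lemma second_difference_mvt:
  fixes f :: "'a::real_normed_vector \<Rightarrow> real"
  assumes st: "s > 0" "t > 0"
    and in_U: "\<And>a b. 0 \<le> a \<Longrightarrow> a \<le> s \<Longrightarrow> 0 \<le> b \<Longrightarrow> b \<le> t \<Longrightarrow> x + a *\<^sub>R v + b *\<^sub>R w \<in> U"
    and f': "\<And>y. y \<in> U \<Longrightarrow> (f has_derivative f' y) (at y)"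
    and f'': "\<And>y. y \<in> U \<Longrightarrow> ((\<lambda>z. f' z v) has_derivative f'' y) (at y)"
  obtains \<sigma> \<tau> where "0 < \<sigma>" "\<sigma> < s" "0 < \<tau>" "\<tau> < t"
    "f (x + s *\<^sub>R v + t *\<^sub>R w) - f (x + s *\<^sub>R v) - f (x + t *\<^sub>R w) + f x
       = s * t * f'' (x + \<sigma> *\<^sub>R v + \<tau> *\<^sub>R w) w"
proof -
  define \<phi> where "\<phi> a = f (x + t *\<^sub>R w + a *\<^sub>R v) - f (x + a *\<^sub>R v)" for a
  have "DERIV \<phi> a :> f' (x + t *\<^sub>R w + a *\<^sub>R v) v - f' (x + a *\<^sub>R v) v" if "0 \<le> a" "a \<le> s" for a
  proof -
    have "x + t *\<^sub>R w + a *\<^sub>R v \<in> U" "x + a *\<^sub>R v \<in> U"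
      using in_U[of a t] in_U[of a 0] that st by (simp_all add: algebra_simps)
    then show ?thesis unfolding \<phi>_def
      by (intro derivative_intros has_field_derivative_along_line f')
  qed
  from MVT2[OF st(1) this] obtain \<sigma> where \<sigma>: "0 < \<sigma>" "\<sigma> < s"
    "\<phi> s - \<phi> 0 = s * (f' (x + t *\<^sub>R w + \<sigma> *\<^sub>R v) v - f' (x + \<sigma> *\<^sub>R v) v)"
    by auto
  define \<psi> where "\<psi> b = f' (x + \<sigma> *\<^sub>R v + b *\<^sub>R w) v" for b
  have "DERIV \<psi> b :> f'' (x + \<sigma> *\<^sub>R v + b *\<^sub>R w) w" if "0 \<le> b" "b \<le> t" for b
    unfolding \<psi>_def using in_U[of \<sigma> b] that \<sigma>
    by (intro has_field_derivative_along_line[where f="\<lambda>z. f' z v"] f'') simp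
  from MVT2[OF st(2) this] obtain \<tau> where \<tau>: "0 < \<tau>" "\<tau> < t"
    "\<psi> t - \<psi> 0 = t * f'' (x + \<sigma> *\<^sub>R v + \<tau> *\<^sub>R w) w"
    by auto
  have "f (x + s *\<^sub>R v + t *\<^sub>R w) - f (x + s *\<^sub>R v) - f (x + t *\<^sub>R w) + f x = \<phi> s - \<phi> 0"
    unfolding \<phi>_def by (simp add: algebra_simps)
  also have "\<dots> = s * t * f'' (x + \<sigma> *\<^sub>R v + \<tau> *\<^sub>R w) w"
    using \<sigma>(3) \<tau>(3) unfolding \<psi>_def by (simp add: algebra_simps)
  finally show ?thesis using that \<sigma> \<tau> by blast
qed

lemma norm_scaleR_add_le:
  assumes "0 \<le> a" "a \<le> s" "0 \<le> b" "b \<le> s"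
  shows "norm (a *\<^sub>R v + b *\<^sub>R w) \<le> s * (norm v + norm w)"
proof -
  have "norm (a *\<^sub>R v + b *\<^sub>R w) \<le> a * norm v + b * norm w"
    using norm_triangle_ineq[of "a *\<^sub>R v" "b *\<^sub>R w"] assms by simp
  also have "\<dots> \<le> s * norm v + s * norm w"
    using assms by (intro add_mono mult_right_mono) auto
  finally show ?thesis by (simp add: algebra_simps)
qed

lemma second_difference_mvt_ball:
  fixes f :: "'a::real_normed_vector \<Rightarrow> real"
  assumes "0 < s" "s * (norm v + norm w) < r" "ball x r \<subseteq> U"
    and f': "\<And>y. y \<in> U \<Longrightarrow> (f has_derivative f' y) (at y)"
    and f'': "\<And>y. y \<in> U \<Longrightarrow> ((\<lambda>z. f' z v) has_derivative f'' y) (at y)"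
  obtains y where "dist y x < r"
    "f (x + s *\<^sub>R v + s *\<^sub>R w) - f (x + s *\<^sub>R v) - f (x + s *\<^sub>R w) + f x = s * s * f'' y w"
proof -
  have near: "dist (x + a *\<^sub>R v + b *\<^sub>R w) x < r" if "0 \<le> a" "a \<le> s" "0 \<le> b" "b \<le> s" for a b
    using norm_scaleR_add_le[OF that, of v w] assms(2) by (simp add: dist_norm add.assoc)
  then have "x + a *\<^sub>R v + b *\<^sub>R w \<in> U" if "0 \<le> a" "a \<le> s" "0 \<le> b" "b \<le> s" for a b
    using that assms(3) by (auto simp: dist_commute)
  from second_difference_mvt[OF \<open>0 < s\<close> \<open>0 < s\<close> this f' f''] obtain \<sigma> \<tau>
    where "0 < \<sigma>" "\<sigma> < s" "0 < \<tau>" "\<tau> < s"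
      "f (x + s *\<^sub>R v + s *\<^sub>R w) - f (x + s *\<^sub>R v) - f (x + s *\<^sub>R w) + f x
        = s * s * f'' (x + \<sigma> *\<^sub>R v + \<tau> *\<^sub>R w) w"
    by blast
  with near[of \<sigma> \<tau>] show thesis using that by simp
qed

lemma mixed_partials_commute_real:
  fixes f :: "'a::real_normed_vector \<Rightarrow> real"
  assumes "open U" "x \<in> U"
    and f': "\<And>y. y \<in> U \<Longrightarrow> (f has_derivative f' y) (at y)"
    and fv: "\<And>y. y \<in> U \<Longrightarrow> ((\<lambda>z. f' z v) has_derivative fv y) (at y)"
    and fw: "\<And>y. y \<in> U \<Longrightarrow> ((\<lambda>z. f' z w) has_derivative fw y) (at y)"
    and cont_v: "continuous_on U (\<lambda>y. fv y w)"
    and cont_w: "continuous_on U (\<lambda>y. fw y v)"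
  shows "fv x w = fw x v"
proof (rule ccontr)
  assume "fv x w \<noteq> fw x v"
  define e where "e = \<bar>fv x w - fw x v\<bar> / 2"
  have "e > 0" using \<open>fv x w \<noteq> fw x v\<close> unfolding e_def by simp
  have "isCont (\<lambda>y. fv y w) x" "isCont (\<lambda>y. fw y v) x"
    using cont_v cont_w assms(1,2) by (simp_all add: continuous_on_eq_continuous_at)
  then obtain d1 d2 where d1: "d1 > 0" "\<And>y. dist y x < d1 \<Longrightarrow> dist (fv y w) (fv x w) < e"
    and d2: "d2 > 0" "\<And>y. dist y x < d2 \<Longrightarrow> dist (fw y v) (fw x v) < e"
    using \<open>e > 0\<close> unfolding continuous_at_eps_delta by blast
  obtain d3 where d3: "d3 > 0" "ball x d3 \<subseteq> U" using assms(1,2) open_contains_ball by blast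
  define r where "r = min d1 (min d2 d3)"
  define s where "s = r / (2 * (norm v + norm w + 1))"
  have "r > 0" "norm v + norm w + 1 > 0" using d1 d2 d3 unfolding r_def by (simp_all add: add_nonneg_pos)
  then have "s > 0" unfolding s_def by simp
  have "s * (norm v + norm w) < s * (2 * (norm v + norm w + 1))"
    using \<open>s > 0\<close> by (intro mult_strict_left_mono) (auto simp: add_nonneg_pos)
  also have "\<dots> = r" unfolding s_def using \<open>norm v + norm w + 1 > 0\<close> by simp
  finally have small: "s * (norm v + norm w) < r" "s * (norm w + norm v) < r" by (simp_all add: add.commute)
  have ball: "ball x r \<subseteq> U" using d3(2) unfolding r_def by auto
  obtain y1 where y1: "dist y1 x < r"
    "f (x + s *\<^sub>R v + s *\<^sub>R w) - f (x + s *\<^sub>R v) - f (x + s *\<^sub>R w) + f x = s * s * fv y1 w"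
    using second_difference_mvt_ball[OF \<open>s > 0\<close> small(1) ball f' fv] by blast
  obtain y2 where y2: "dist y2 x < r"
    "f (x + s *\<^sub>R w + s *\<^sub>R v) - f (x + s *\<^sub>R w) - f (x + s *\<^sub>R v) + f x = s * s * fw y2 v"
    using second_difference_mvt_ball[OF \<open>s > 0\<close> small(2) ball f' fw] by blast
  have "fv y1 w = fw y2 v"
    using y1(2) y2(2) \<open>s > 0\<close> by (simp add: algebra_simps)
  moreover have "dist (fv y1 w) (fv x w) < e" "dist (fw y2 v) (fw x v) < e"
    using d1(2) d2(2) y1(1) y2(1) unfolding r_def by auto
  ultimately show False unfolding e_def dist_real_def by (auto simp: abs_if split: if_split_asm)
qed

lemma smooth_on_mixed_partials_commute:
  fixes f :: "'a::real_normed_vector \<Rightarrow> 'b::real_inner"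
  assumes "smooth_on U f" "open U" "x \<in> U"
  shows "fderiv (\<lambda>z. fderiv f z v) x w = fderiv (\<lambda>z. fderiv f z w) x v"
proof (rule vector_eq_rdot[THEN iffD1], rule allI)
  fix c
  note f' = smooth_on_has_derivative[OF assms(1)]
  note f'' = smooth_on_has_derivative[OF smooth_on_fderiv[OF assms(1)]]
  note cont = smooth_on_imp_continuous_on[OF smooth_on_fderiv[OF smooth_on_fderiv[OF assms(1)]]]
  show "fderiv (\<lambda>z. fderiv f z v) x w \<bullet> c = fderiv (\<lambda>z. fderiv f z w) x v \<bullet> c"
  proof (rule mixed_partials_commute_real[where f="\<lambda>y. f y \<bullet> c", OF assms(2,3)])
    fix y assume "y \<in> U"
    show "((\<lambda>y. f y \<bullet> c) has_derivative (\<lambda>h. fderiv f y h \<bullet> c)) (at y)"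
      "((\<lambda>z. fderiv f z v \<bullet> c) has_derivative (\<lambda>h. fderiv (\<lambda>z. fderiv f z v) y h \<bullet> c)) (at y)"
      "((\<lambda>z. fderiv f z w \<bullet> c) has_derivative (\<lambda>h. fderiv (\<lambda>z. fderiv f z w) y h \<bullet> c)) (at y)"
      using f' f'' \<open>y \<in> U\<close> by (auto intro: has_derivative_inner_left)
  qed (intro continuous_intros cont)+
qed

section \<open>Matrix fields and Lie derivatives of (1,1)-tensors\<close>

lemma matrix_add_rdistrib: "((A::real^'n^'m) + B) ** (C::real^'p^'n) = A ** C + B ** C"
  by (vector matrix_matrix_mult_def sum.distrib[symmetric] field_simps)

lemma matrix_vector_mult_neg: "(- A) *v (x::real^'n) = - (A *v x)"
  by (simp add: matrix_vector_mult_def vec_eq_iff sum_negf[symmetric])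

lemma matrix_vector_mult_neg_right: "A *v (- x) = - (A *v (x::real^'n))"
  by (simp add: matrix_vector_mult_def vec_eq_iff sum_negf[symmetric])

lemmas matrix_vector_mult_distribs =
  matrix_vector_mult_add_rdistrib matrix_vector_mult_diff_rdistrib matrix_vector_mult_neg
  scaleR_matrix_vector_assoc[symmetric] matrix_vector_mul_assoc[symmetric]
  matrix_vector_right_distrib matrix_vector_mult_diff_distrib matrix_vector_mult_neg_right
  matrix_vector_mult_scaleR

lemma bounded_bilinear_matrix_matrix_mult:
  "bounded_bilinear ((**) :: real^'n^'m \<Rightarrow> real^'p^'n \<Rightarrow> real^'p^'m)"
proof -
  have "bilinear ((**) :: real^'n^'m \<Rightarrow> real^'p^'n \<Rightarrow> real^'p^'m)"
    unfolding bilinear_def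
  proof (intro conjI allI)
    show "linear ((**) A)" for A :: "real^'n^'m"
      by (rule linearI) (simp_all add: matrix_add_ldistrib matrix_scalar_ac scalar_matrix_assoc)
    show "linear (\<lambda>A::real^'n^'m. A ** B)" for B :: "real^'p^'n"
      by (rule linearI) (simp_all add: matrix_add_rdistrib scalar_matrix_assoc[symmetric])
  qed
  then show ?thesis using bilinear_conv_bounded_bilinear by blast
qed

lemma bounded_bilinear_matrix_vector_mult:
  "bounded_bilinear ((*v) :: real^'n^'m \<Rightarrow> real^'n \<Rightarrow> real^'m)"
proof -
  have "bilinear ((*v) :: real^'n^'m \<Rightarrow> real^'n \<Rightarrow> real^'m)"
    unfolding bilinear_def
  proof (intro conjI allI)
    show "linear ((*v) A)" for A :: "real^'n^'m"
      by (rule linearI) (simp_all add: matrix_vector_right_distrib matrix_vector_mult_scaleR)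
    show "linear (\<lambda>A::real^'n^'m. A *v x)" for x :: "real^'n"
      by (rule linearI) (simp_all add: matrix_vector_mult_add_rdistrib scaleR_matrix_vector_assoc)
  qed
  then show ?thesis using bilinear_conv_bounded_bilinear by blast
qed

lemmas has_derivative_matrix_matrix_mult [derivative_intros] =
  bounded_bilinear.FDERIV[OF bounded_bilinear_matrix_matrix_mult]
lemmas has_derivative_matrix_vector_mult [derivative_intros] =
  bounded_bilinear.FDERIV[OF bounded_bilinear_matrix_vector_mult]

lemma bounded_linear_transpose: "bounded_linear (transpose :: real^'n^'m \<Rightarrow> real^'m^'n)"
proof -
  have "linear (transpose :: real^'n^'m \<Rightarrow> real^'m^'n)"
    by (rule linearI) (simp_all add: transpose_def vec_eq_iff)
  then show ?thesis using linear_conv_bounded_linear by blast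
qed

lemma has_derivative_vec_lambda:
  fixes f :: "'a::real_normed_vector \<Rightarrow> 'i::finite \<Rightarrow> 'b::euclidean_space"
  assumes "\<And>i. ((\<lambda>x. f x i) has_derivative f' i) (at a)"
  shows "((\<lambda>x. \<chi> i. f x i) has_derivative (\<lambda>h. \<chi> i. f' i h)) (at a)"
  by (subst has_derivative_componentwise_within)
    (use assms in \<open>auto simp: Basis_vec_def inner_axis intro!: has_derivative_inner_left\<close>)

lemma fderiv_eqI: "(f has_derivative f') (at x) \<Longrightarrow> fderiv f x v = f' v"
  by (simp add: frechet_derivative_at[symmetric])

lemma differentiable_matrix_mult:
  fixes A :: "'a::real_normed_vector \<Rightarrow> real^'n^'m" and B :: "'a \<Rightarrow> real^'p^'n"
  assumes "A differentiable (at q)" "B differentiable (at q)"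
  shows "(\<lambda>y. A y ** B y) differentiable (at q)"
  using has_derivative_matrix_matrix_mult assms unfolding differentiable_def by blast

lemma fderiv_matrix_mult:
  fixes A :: "'a::real_normed_vector \<Rightarrow> real^'n^'m" and B :: "'a \<Rightarrow> real^'p^'n"
  assumes "A differentiable (at q)" "B differentiable (at q)"
  shows "fderiv (\<lambda>y. A y ** B y) q k = A q ** fderiv B q k + fderiv A q k ** B q"
  by (rule fderiv_eqI, rule has_derivative_matrix_matrix_mult[OF assms[unfolded frechet_derivative_works]])

lemma fderiv_add:
  assumes "A differentiable (at q)" "B differentiable (at q)"
  shows "fderiv (\<lambda>y. A y + B y) q k = fderiv A q k + fderiv B q k"
  by (rule fderiv_eqI, rule has_derivative_add[OF assms[unfolded frechet_derivative_works]])

lemma fderiv_minus: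
  assumes "A differentiable (at q)"
  shows "fderiv (\<lambda>y. - A y) q k = - fderiv A q k"
  by (rule fderiv_eqI, rule has_derivative_minus[OF assms[unfolded frechet_derivative_works]])

lemma fderiv_scaleR:
  assumes "A differentiable (at q)"
  shows "fderiv (\<lambda>y. c *\<^sub>R A y) q k = c *\<^sub>R fderiv A q k"
  by (rule fderiv_eqI, rule has_derivative_scaleR_right[OF assms[unfolded frechet_derivative_works]])

lemma fderiv_basis_expansion:
  fixes f :: "real^'n \<Rightarrow> 'b::real_normed_vector"
  assumes "smooth_on U f" "y \<in> U"
  shows "fderiv f y c = (\<Sum>i\<in>UNIV. (c $ i) *\<^sub>R fderiv f y (axis i 1))"
proof -
  have "fderiv f y c = fderiv f y (\<Sum>i\<in>UNIV. (c $ i) *\<^sub>R axis i 1)"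
    using basis_expansion[of c] by (simp add: scalar_mult_eq_scaleR)
  also have "\<dots> = (\<Sum>i\<in>UNIV. (c $ i) *\<^sub>R fderiv f y (axis i 1))"
    using linear_fderiv[OF assms] by (simp add: linear_sum linear_scale)
  finally show ?thesis .
qed

text \<open>Proved by expanding \<open>X y\<close> in the standard basis: smoothness only says that the
  directional derivatives \<open>y \<mapsto> D f(y) e\<^sub>i\<close> are differentiable.\<close>

lemma has_derivative_fderiv_along_field:
  fixes f :: "real^'n \<Rightarrow> 'b::real_normed_vector" and X :: "real^'n \<Rightarrow> real^'n"
  assumes "smooth_on U f" "smooth_on U X" "open U" "q \<in> U"
  shows "((\<lambda>y. fderiv f y (X y)) has_derivative
           (\<lambda>k. fderiv (\<lambda>y. fderiv f y (X q)) q k + fderiv f q (fderiv X q k))) (at q)"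
proof -
  note expand = fderiv_basis_expansion[OF assms(1)]
  note f'' = smooth_on_has_derivative[OF smooth_on_fderiv[OF assms(1)] assms(4)]
  have "((\<lambda>y. \<Sum>i\<in>UNIV. (X q $ i) *\<^sub>R fderiv f y (axis i 1)) has_derivative
        (\<lambda>k. \<Sum>i\<in>UNIV. (X q $ i) *\<^sub>R fderiv (\<lambda>y. fderiv f y (axis i 1)) q k)) (at q)"
    by (intro has_derivative_sum has_derivative_scaleR_right f'')
  then have f''_X: "fderiv (\<lambda>y. fderiv f y (X q)) q k
      = (\<Sum>i\<in>UNIV. (X q $ i) *\<^sub>R fderiv (\<lambda>y. fderiv f y (axis i 1)) q k)" for k
    by (subst fderiv_transform_open[OF assms(3,4) expand]) auto
  have X': "((\<lambda>y. X y $ i) has_derivative (\<lambda>k. fderiv X q k $ i)) (at q)" for i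
    by (rule bounded_linear.has_derivative[OF bounded_linear_vec_nth smooth_on_has_derivative[OF assms(2,4)]])
  have "((\<lambda>y. \<Sum>i\<in>UNIV. (X y $ i) *\<^sub>R fderiv f y (axis i 1)) has_derivative
        (\<lambda>k. \<Sum>i\<in>UNIV. (X q $ i) *\<^sub>R fderiv (\<lambda>y. fderiv f y (axis i 1)) q k
              + (fderiv X q k $ i) *\<^sub>R fderiv f q (axis i 1))) (at q)"
    by (intro has_derivative_sum has_derivative_scaleR X' f'')
  then have "((\<lambda>y. \<Sum>i\<in>UNIV. (X y $ i) *\<^sub>R fderiv f y (axis i 1)) has_derivative
        (\<lambda>k. fderiv (\<lambda>y. fderiv f y (X q)) q k + fderiv f q (fderiv X q k))) (at q)"
    by (simp add: f''_X sum.distrib expand[OF assms(4), of "fderiv X q _"])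
  then show ?thesis
    by (rule has_derivative_transform_within_open[OF _ assms(3,4)]) (simp add: expand)
qed

lemma jac_matrix_vector_mult: "smooth_on U X \<Longrightarrow> q \<in> U \<Longrightarrow> jac X q *v v = fderiv X q v"
  unfolding jac_def using linear_fderiv matrix_vector_mul(2) by metis

lemma differentiable_jac:
  assumes "smooth_on U X" "q \<in> U"
  shows "jac X differentiable (at q)"
proof -
  have "((\<lambda>q. \<chi> i j. fderiv X q (axis j 1) $ i) has_derivative
      (\<lambda>h. \<chi> i j. fderiv (\<lambda>q. fderiv X q (axis j 1)) q h $ i)) (at q)"
    by (intro has_derivative_vec_lambda bounded_linear.has_derivative[OF bounded_linear_vec_nth]
        smooth_on_has_derivative[OF smooth_on_fderiv[OF assms(1)] assms(2)])
  then show ?thesis unfolding jac_def matrix_def differentiable_def by blast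
qed

lemma lie_tensor_apply:
  assumes "smooth_on U xi" "q \<in> U"
  shows "lie_tensor xi A q *v v = fderiv A q (xi q) *v v - fderiv xi q (A q *v v) + A q *v fderiv xi q v"
  unfolding lie_tensor_def by (simp add: matrix_vector_mult_distribs jac_matrix_vector_mult[OF assms])

lemma differentiable_lie_tensor:
  assumes "open U" "q \<in> U" "smooth_on U xi" "smooth_on U A"
  shows "lie_tensor xi A differentiable (at q)"
proof -
  have "(\<lambda>y. fderiv A y (xi y)) differentiable (at q)"
    using has_derivative_fderiv_along_field[OF assms(4,3,1,2)] unfolding differentiable_def by blast
  then show ?thesis unfolding lie_tensor_def[abs_def]
    by (intro differentiable_add differentiable_diff differentiable_matrix_mult
        differentiable_jac[OF assms(3,2)] smooth_on_differentiable[OF assms(4,2)])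
qed

lemma lie_tensor_matrix_mult:
  assumes "A differentiable (at q)" "B differentiable (at q)"
  shows "lie_tensor xi (\<lambda>y. A y ** B y) q = lie_tensor xi A q ** B q + A q ** lie_tensor xi B q"
  unfolding lie_tensor_def fderiv_matrix_mult[OF assms] matrix_eq
  by (simp add: matrix_vector_mult_distribs)

lemma lie_tensor_add:
  assumes "A differentiable (at q)" "B differentiable (at q)"
  shows "lie_tensor xi (\<lambda>y. A y + B y) q = lie_tensor xi A q + lie_tensor xi B q"
  unfolding lie_tensor_def fderiv_add[OF assms] matrix_eq
  by (simp add: matrix_vector_mult_distribs)

lemma lie_tensor_minus:
  assumes "A differentiable (at q)"
  shows "lie_tensor xi (\<lambda>y. - A y) q = - lie_tensor xi A q"
  unfolding lie_tensor_def fderiv_minus[OF assms] matrix_eq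
  by (simp add: matrix_vector_mult_distribs)

lemma lie_tensor_scaleR:
  assumes "A differentiable (at q)"
  shows "lie_tensor xi (\<lambda>y. c *\<^sub>R A y) q = c *\<^sub>R lie_tensor xi A q"
  unfolding lie_tensor_def fderiv_scaleR[OF assms] matrix_eq
  by (simp add: matrix_vector_mult_distribs scaleR_add_right scaleR_diff_right)

lemma lie_tensor_vanishing_on_open:
  assumes "open U" "q \<in> U" "\<And>y. y \<in> U \<Longrightarrow> A y = 0"
  shows "lie_tensor xi A q = 0"
proof -
  have "fderiv A q = (\<lambda>_. 0)"
    using fderiv_transform_open[OF assms(1,2), of A "\<lambda>_. 0"] assms(3) by simp
  then show ?thesis unfolding lie_tensor_def using assms(2,3) by simp
qed

lemma inner_eqI: "(\<And>c. x \<bullet> c = y \<bullet> c) \<Longrightarrow> x = (y::'a::real_inner)"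
  using vector_eq_rdot by blast

lemmas inner_linear_left = inner_add_left inner_diff_left inner_scaleR_left inner_minus_left inner_zero_left

lemma inner_matrix_vector_mult_sym:
  "transpose A = A \<Longrightarrow> (v::real^'n) \<bullet> (A *v w) = w \<bullet> (A *v v)"
  by (metis dot_lmul_matrix inner_commute transpose_matrix_vector vector_transpose_matrix)

lemma inner_vec_lambda_linear:
  fixes F :: "real^'n \<Rightarrow> real"
  assumes "linear F"
  shows "z \<bullet> (\<chi> k. F (axis k 1)) = F z"
proof -
  have "z \<bullet> (\<chi> k. F (axis k 1)) = (\<Sum>k\<in>UNIV. z $ k * F (axis k 1))"
    by (simp add: inner_vec_def)
  also have "\<dots> = F (\<Sum>k\<in>UNIV. (z $ k) *\<^sub>R axis k 1)"
    using assms by (simp add: linear_sum linear_scale)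
  also have "\<dots> = F z" using basis_expansion[of z] by (simp add: scalar_mult_eq_scaleR)
  finally show ?thesis .
qed

section \<open>Contact metric structures\<close>

locale contact_metric =
  fixes U :: "(real^'n) set" and eta xi :: "real^'n \<Rightarrow> real^'n" and phi g :: "real^'n \<Rightarrow> real^'n^'n"
  assumes contact_metric: "contact_metric_on U eta xi phi g"
begin

abbreviation h where "h q \<equiv> hten xi phi q"

lemma open_U: "open U"
  and smooth_eta: "smooth_on U eta" and smooth_xi: "smooth_on U xi"
  and smooth_phi: "smooth_on U phi" and smooth_g: "smooth_on U g"
  using contact_metric unfolding contact_metric_on_def by auto

lemma g_transpose: "q \<in> U \<Longrightarrow> transpose (g q) = g q"
  and g_pos: "q \<in> U \<Longrightarrow> v \<noteq> 0 \<Longrightarrow> v \<bullet> (g q *v v) > 0"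
  and eta_xi: "q \<in> U \<Longrightarrow> eta q \<bullet> xi q = 1"
  and deta_xi: "q \<in> U \<Longrightarrow> d_form eta q (xi q) v = 0"
  and phi_phi: "q \<in> U \<Longrightarrow> phi q *v (phi q *v v) = - v + (eta q \<bullet> v) *\<^sub>R xi q"
  and phi_xi: "q \<in> U \<Longrightarrow> phi q *v xi q = 0"
  and g_xi: "q \<in> U \<Longrightarrow> v \<bullet> (g q *v xi q) = eta q \<bullet> v"
  and deta_eq: "q \<in> U \<Longrightarrow> d_form eta q v w = 2 * (v \<bullet> (g q *v (phi q *v w)))"
  using contact_metric unfolding contact_metric_on_def gform_def by auto

lemma differentiable_phi: "q \<in> U \<Longrightarrow> phi differentiable (at q)"
  using smooth_on_differentiable[OF smooth_phi] .

lemma differentiable_h: "q \<in> U \<Longrightarrow> hten xi phi differentiable (at q)"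
  unfolding hten_def[abs_def]
  by (intro differentiable_scaleR differentiable_const differentiable_lie_tensor[OF open_U _ smooth_xi smooth_phi])

lemma lie_phi: "lie_tensor xi phi q = 2 *\<^sub>R h q"
  unfolding hten_def by simp

lemma eta_phi: "q \<in> U \<Longrightarrow> eta q \<bullet> (phi q *v v) = 0"
proof -
  assume q: "q \<in> U"
  have "phi q *v (phi q *v (phi q *v v)) = - (phi q *v v) + (eta q \<bullet> (phi q *v v)) *\<^sub>R xi q"
    by (rule phi_phi[OF q])
  moreover have "phi q *v (phi q *v (phi q *v v)) = - (phi q *v v)"
    by (simp add: phi_phi[OF q] matrix_vector_mult_distribs phi_xi[OF q])
  ultimately have "(eta q \<bullet> (phi q *v v)) *\<^sub>R xi q = 0" by simp
  then show ?thesis using eta_xi[OF q] by auto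
qed

context
  fixes q assumes q: "q \<in> U"
begin

lemma g_sym: "v \<bullet> (g q *v w) = w \<bullet> (g q *v v)"
  using inner_matrix_vector_mult_sym[OF g_transpose[OF q]] .

lemma g_inner_eqI: "(\<And>z. z \<bullet> (g q *v x) = z \<bullet> (g q *v y)) \<Longrightarrow> x = y"
proof -
  assume "\<And>z. z \<bullet> (g q *v x) = z \<bullet> (g q *v y)"
  then have "(x - y) \<bullet> (g q *v (x - y)) = 0"
    by (simp add: matrix_vector_mult_diff_distrib inner_diff_right)
  then show "x = y" using g_pos[OF q, of "x - y"] by fastforce
qed

lemma phi_skew: "v \<bullet> (g q *v (phi q *v w)) = - ((phi q *v v) \<bullet> (g q *v w))"
  using deta_eq[OF q, of v w] deta_eq[OF q, of w v] g_sym[of w "phi q *v v"]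
  unfolding d_form_def by simp

lemma linear_fderiv_eta: "linear (fderiv eta q)" and linear_fderiv_xi: "linear (fderiv xi q)"
  and linear_fderiv_phi: "linear (fderiv phi q)" and linear_fderiv_g: "linear (fderiv g q)"
  using linear_fderiv q smooth_eta smooth_xi smooth_phi smooth_g by blast+

lemmas fderiv_linear_simps =
  linear_add[OF linear_fderiv_eta] linear_add[OF linear_fderiv_xi]
  linear_add[OF linear_fderiv_phi] linear_add[OF linear_fderiv_g]
  linear_diff[OF linear_fderiv_eta] linear_diff[OF linear_fderiv_xi]
  linear_diff[OF linear_fderiv_phi] linear_diff[OF linear_fderiv_g]
  linear_neg[OF linear_fderiv_eta] linear_neg[OF linear_fderiv_xi]
  linear_neg[OF linear_fderiv_phi] linear_neg[OF linear_fderiv_g]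
  linear_scale[OF linear_fderiv_eta] linear_scale[OF linear_fderiv_xi]
  linear_scale[OF linear_fderiv_phi] linear_scale[OF linear_fderiv_g]
  linear_0[OF linear_fderiv_eta] linear_0[OF linear_fderiv_xi]
  linear_0[OF linear_fderiv_phi] linear_0[OF linear_fderiv_g]

lemma has_derivative_eta: "(eta has_derivative fderiv eta q) (at q)"
  and has_derivative_xi: "(xi has_derivative fderiv xi q) (at q)"
  and has_derivative_phi: "(phi has_derivative fderiv phi q) (at q)"
  and has_derivative_g: "(g has_derivative fderiv g q) (at q)"
  using smooth_on_has_derivative q smooth_eta smooth_xi smooth_phi smooth_g by blast+

text \<open>The identities of the structure hold on the whole open set \<open>U\<close>, so they may be
  differentiated; most of the following lemmas are obtained this way.\<close>

lemmas derivative_of_identity = has_derivative_zero_if_constant_on_open[OF open_U q]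

lemma lie_eta_zero: "fderiv eta q (xi q) \<bullet> v + eta q \<bullet> fderiv xi q v = 0"
proof -
  have "eta q \<bullet> fderiv xi q v + fderiv eta q v \<bullet> xi q = 0"
    using derivative_of_identity[OF _ has_derivative_inner[OF has_derivative_eta has_derivative_xi], of 1]
      eta_xi by blast
  moreover have "fderiv eta q (xi q) \<bullet> v - fderiv eta q v \<bullet> xi q = 0"
    using deta_xi[OF q, of v] unfolding d_form_def .
  ultimately show ?thesis by linarith
qed

lemma h_apply:
  "h q *v v = (1/2) *\<^sub>R (fderiv phi q (xi q) *v v - fderiv xi q (phi q *v v) + phi q *v fderiv xi q v)"
  unfolding hten_def by (simp add: scaleR_matrix_vector_assoc[symmetric] lie_tensor_apply[OF smooth_xi q])

lemma h_xi: "h q *v xi q = 0"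
proof -
  have "phi q *v fderiv xi q (xi q) + fderiv phi q (xi q) *v xi q = 0"
    using derivative_of_identity[OF _ has_derivative_matrix_vector_mult[OF has_derivative_phi has_derivative_xi]]
      phi_xi by blast
  then show ?thesis by (simp add: h_apply phi_xi[OF q] fderiv_linear_simps add.commute)
qed

lemma phi_h_anticomm: "phi q *v (h q *v v) + h q *v (phi q *v v) = 0"
proof -
  note D = has_derivative_diff[OF
      has_derivative_matrix_vector_mult[OF has_derivative_phi
        has_derivative_matrix_vector_mult[OF has_derivative_phi has_derivative_const[of v]]]
      has_derivative_scaleR[OF has_derivative_inner[OF has_derivative_eta has_derivative_const[of v]]
        has_derivative_xi]]
  from derivative_of_identity[OF _ D, of "- v" "xi q"]
  have e: "phi q *v (fderiv phi q (xi q) *v v) + fderiv phi q (xi q) *v (phi q *v v)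
      - ((eta q \<bullet> v) *\<^sub>R fderiv xi q (xi q) + (fderiv eta q (xi q) \<bullet> v) *\<^sub>R xi q) = 0"
    using phi_phi by (simp add: algebra_simps)
  have "2 *\<^sub>R (phi q *v (h q *v v) + h q *v (phi q *v v))
     = (phi q *v (fderiv phi q (xi q) *v v) + fderiv phi q (xi q) *v (phi q *v v))
       + phi q *v (phi q *v fderiv xi q v) - fderiv xi q (phi q *v (phi q *v v))"
    by (simp add: h_apply matrix_vector_mult_distribs algebra_simps)
  also have "\<dots> = (fderiv eta q (xi q) \<bullet> v + eta q \<bullet> fderiv xi q v) *\<^sub>R xi q"
    using e by (simp add: phi_phi[OF q] fderiv_linear_simps algebra_simps)
  also have "\<dots> = 0" by (simp add: lie_eta_zero)
  finally show ?thesis by simp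
qed

lemma h_phi: "h q *v (phi q *v v) = - (phi q *v (h q *v v))"
  using phi_h_anticomm[of v] by (simp add: eq_neg_iff_add_eq_0 add.commute)

lemma eta_h: "eta q \<bullet> (h q *v v) = 0"
proof -
  note D = has_derivative_inner[OF has_derivative_eta has_derivative_matrix_vector_mult[OF has_derivative_phi has_derivative_const[of v]]]
  have "eta q \<bullet> (phi q *v 0 + fderiv phi q (xi q) *v v) + fderiv eta q (xi q) \<bullet> (phi q *v v) = 0"
    using derivative_of_identity[OF _ D, of 0 "xi q"] eta_phi by blast
  then have "2 * (eta q \<bullet> (h q *v v)) = - (fderiv eta q (xi q) \<bullet> (phi q *v v) + eta q \<bullet> fderiv xi q (phi q *v v))"
    by (simp add: h_apply inner_add_right inner_diff_right eta_phi[OF q])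
  then show ?thesis by (simp add: lie_eta_zero)
qed

lemma fderiv_g_sym: "v \<bullet> (fderiv g q k *v w) = w \<bullet> (fderiv g q k *v v)"
proof (rule inner_matrix_vector_mult_sym)
  note D = has_derivative_diff[OF bounded_linear.has_derivative[OF bounded_linear_transpose has_derivative_g] has_derivative_g]
  show "transpose (fderiv g q k) = fderiv g q k"
    using derivative_of_identity[OF _ D, of 0 k] g_transpose by simp
qed

end

text \<open>\<open>(L\<^sub>\<xi> g)(v, w)\<close> for constant vector fields \<open>v\<close>, \<open>w\<close>.\<close>

definition lie_metric :: "real^'n \<Rightarrow> real^'n \<Rightarrow> real^'n \<Rightarrow> real" where
  "lie_metric q v w =
     v \<bullet> (fderiv g q (xi q) *v w) + fderiv xi q v \<bullet> (g q *v w) + v \<bullet> (g q *v fderiv xi q w)"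

context
  fixes q assumes q: "q \<in> U"
begin

lemma lie_metric_sym: "lie_metric q v w = lie_metric q w v"
  unfolding lie_metric_def
  using fderiv_g_sym[OF q, of v "xi q" w] g_sym[OF q, of "fderiv xi q v" w] g_sym[OF q, of v "fderiv xi q w"]
  by (simp add: algebra_simps)

lemma lie_metric_xi: "lie_metric q v (xi q) = 0"
proof -
  note D = has_derivative_diff[OF
      has_derivative_inner[OF has_derivative_const[of v]
        has_derivative_matrix_vector_mult[OF has_derivative_g[OF q] has_derivative_xi[OF q]]]
      has_derivative_inner[OF has_derivative_eta[OF q] has_derivative_const[of v]]]
  have "v \<bullet> (g q *v fderiv xi q (xi q) + fderiv g q (xi q) *v xi q) - fderiv eta q (xi q) \<bullet> v = 0"
    using derivative_of_identity[OF q _ D, of 0 "xi q"] g_xi by simp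
  then have "lie_metric q v (xi q) = fderiv eta q (xi q) \<bullet> v + eta q \<bullet> fderiv xi q v"
    using g_xi[OF q, of "fderiv xi q v"] unfolding lie_metric_def by (simp add: inner_add_right algebra_simps)
  then show ?thesis using lie_eta_zero[OF q] by simp
qed

text \<open>\<open>L\<^sub>\<xi> d\<eta> = d L\<^sub>\<xi> \<eta> = 0\<close>; in coordinates this needs the symmetry of second derivatives
  of \<open>\<eta>\<close> and \<open>\<xi>\<close>.\<close>

lemma lie_deta:
  "fderiv (\<lambda>y. fderiv eta y v) q (xi q) \<bullet> w - fderiv (\<lambda>y. fderiv eta y w) q (xi q) \<bullet> v
     + d_form eta q (fderiv xi q v) w + d_form eta q v (fderiv xi q w) = 0"
proof -
  define eta'' where "eta'' a k = fderiv (\<lambda>y. fderiv eta y a) q k" for a k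
  define xi'' where "xi'' a k = fderiv (\<lambda>y. fderiv xi y a) q k" for a k
  have xi''_sym: "xi'' a b = xi'' b a" for a b
    unfolding xi''_def by (rule smooth_on_mixed_partials_commute[OF smooth_xi open_U q])
  have eta''_sym: "eta'' a b = eta'' b a" for a b
    unfolding eta''_def by (rule smooth_on_mixed_partials_commute[OF smooth_eta open_U q])
  have lie_eta_deriv: "(eta'' b (xi q) + fderiv eta q (fderiv xi q b)) \<bullet> a
      + eta q \<bullet> xi'' a b + fderiv eta q b \<bullet> fderiv xi q a = 0" for a b
  proof -
    note D = has_derivative_add[OF
        has_derivative_inner[OF has_derivative_fderiv_along_field[OF smooth_eta smooth_xi open_U q]
          has_derivative_const[of a]]
        has_derivative_inner[OF has_derivative_eta[OF q]
          smooth_on_has_derivative[OF smooth_on_fderiv[OF smooth_xi] q, of a]]]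
    have "(eta'' (xi q) b + fderiv eta q (fderiv xi q b)) \<bullet> a
        + (eta q \<bullet> xi'' a b + fderiv eta q b \<bullet> fderiv xi q a) = 0"
      using derivative_of_identity[OF q _ D, of 0 b] lie_eta_zero unfolding eta''_def xi''_def by simp
    then show ?thesis using eta''_sym[of "xi q" b] by (simp add: algebra_simps)
  qed
  show ?thesis
    using lie_eta_deriv[of w v] lie_eta_deriv[of v w] xi''_sym[of v w]
    unfolding eta''_def[symmetric] d_form_def by (simp add: inner_add_left algebra_simps)
qed

lemma lie_metric_phi: "lie_metric q v (phi q *v w) = - 2 * (v \<bullet> (g q *v (h q *v w)))"
proof -
  note D = has_derivative_diff[OF
      has_derivative_diff[OF
        has_derivative_inner[OF smooth_on_has_derivative[OF smooth_on_fderiv[OF smooth_eta] q, of v]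
          has_derivative_const[of w]]
        has_derivative_inner[OF smooth_on_has_derivative[OF smooth_on_fderiv[OF smooth_eta] q, of w]
          has_derivative_const[of v]]]
      has_derivative_mult[OF has_derivative_const[of 2]
        has_derivative_inner[OF has_derivative_const[of v]
          has_derivative_matrix_vector_mult[OF has_derivative_g[OF q]
            has_derivative_matrix_vector_mult[OF has_derivative_phi[OF q] has_derivative_const[of w]]]]]]
  have deta_along_xi:
    "fderiv (\<lambda>y. fderiv eta y v) q (xi q) \<bullet> w - fderiv (\<lambda>y. fderiv eta y w) q (xi q) \<bullet> v
      = 2 * (v \<bullet> (g q *v (fderiv phi q (xi q) *v w)) + v \<bullet> (fderiv g q (xi q) *v (phi q *v w)))"
    using derivative_of_identity[OF q _ D, of 0 "xi q"] deta_eq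
    unfolding d_form_def by (simp add: inner_add_right)
  have "2 * (lie_metric q v (phi q *v w) + 2 * (v \<bullet> (g q *v (h q *v w))))
     = 2 * (v \<bullet> (fderiv g q (xi q) *v (phi q *v w)) + v \<bullet> (g q *v (fderiv phi q (xi q) *v w))
        + fderiv xi q v \<bullet> (g q *v (phi q *v w)) + v \<bullet> (g q *v (phi q *v fderiv xi q w)))"
    unfolding lie_metric_def h_apply[OF q]
    by (simp add: matrix_vector_mult_distribs inner_add_right inner_diff_right algebra_simps)
  also have "\<dots> = 0"
    using lie_deta[of v w] deta_along_xi deta_eq[OF q, of "fderiv xi q v" w] deta_eq[OF q, of v "fderiv xi q w"]
    by (simp add: algebra_simps)
  finally show ?thesis by simp
qed

lemma lie_metric_eq: "lie_metric q v w = - 2 * (v \<bullet> (g q *v (phi q *v (h q *v w))))"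
proof -
  have "lie_metric q v (phi q *v (phi q *v w)) = - lie_metric q v w + (eta q \<bullet> w) * lie_metric q v (xi q)"
    unfolding phi_phi[OF q] lie_metric_def
    by (simp add: fderiv_linear_simps[OF q] matrix_vector_mult_distribs inner_add_right algebra_simps)
  then show ?thesis
    using lie_metric_xi lie_metric_phi[of v "phi q *v w"] h_phi[OF q, of w] by (simp add: matrix_vector_mult_neg_right)
qed

lemma phi_phi_h: "phi q *v (phi q *v (h q *v v)) = - (h q *v v)"
  by (simp add: phi_phi[OF q] eta_h[OF q])

lemma h_phi_phi: "h q *v (phi q *v (phi q *v v)) = - (h q *v v)"
  by (simp add: phi_phi[OF q] h_xi[OF q] matrix_vector_mult_distribs)

lemma phi_h_phi: "phi q *v (h q *v (phi q *v v)) = h q *v v"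
  using h_phi[OF q, of "phi q *v v"] h_phi_phi by (simp add: matrix_vector_mult_neg_right)

lemma phi_phi_phi: "phi q *v (phi q *v (phi q *v v)) = - (phi q *v v)"
  by (simp add: phi_phi[OF q] phi_xi[OF q] matrix_vector_mult_distribs)

lemma h_h_phi: "h q *v (h q *v (phi q *v v)) = phi q *v (h q *v (h q *v v))"
  using h_phi[OF q, of v] h_phi[OF q, of "h q *v v"] by (simp add: matrix_vector_mult_neg_right)

lemma phi_h_sym: "v \<bullet> (g q *v (phi q *v (h q *v w))) = w \<bullet> (g q *v (phi q *v (h q *v v)))"
  using lie_metric_sym[of v w] lie_metric_eq[of v w] lie_metric_eq[of w v] by simp

lemma h_sym: "(h q *v v) \<bullet> (g q *v w) = v \<bullet> (g q *v (h q *v w))"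
proof -
  have "(h q *v v) \<bullet> (g q *v w) = (phi q *v (h q *v v)) \<bullet> (g q *v (phi q *v w))"
    using phi_phi_h[of v] phi_skew[OF q, of "phi q *v (h q *v v)" w] by simp
  also have "\<dots> = v \<bullet> (g q *v (phi q *v (h q *v (phi q *v w))))"
    using g_sym[OF q] phi_h_sym[of "phi q *v w" v] by simp
  also have "\<dots> = v \<bullet> (g q *v (h q *v w))" by (simp add: phi_h_phi)
  finally show ?thesis .
qed

lemma g_matrix_inv: "g q ** matrix_inv (g q) = mat 1"
proof -
  have "inj ((*v) (g q))"
  proof (rule injI)
    show "g q *v x = g q *v y \<Longrightarrow> x = y" for x y by (rule g_inner_eqI[OF q]) simp
  qed
  then have "invertible (g q)"
    using matrix_left_invertible_injective invertible_left_inverse by blast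
  then have "\<exists>A'. g q ** A' = mat 1 \<and> A' ** g q = mat 1" unfolding invertible_def .
  then show ?thesis unfolding matrix_inv_def by (metis (mono_tags, lifting) someI_ex)
qed

lemma christoffel_koszul:
  "z \<bullet> (g q *v christoffel g q v w)
     = (1/2) * (w \<bullet> (fderiv g q v *v z) + v \<bullet> (fderiv g q w *v z) - v \<bullet> (fderiv g q z *v w))"
proof -
  have lin: "linear (\<lambda>u. (1/2) * (w \<bullet> (fderiv g q v *v u) + v \<bullet> (fderiv g q w *v u) - v \<bullet> (fderiv g q u *v w)))"
    by (rule linearI)
      (simp_all add: fderiv_linear_simps[OF q] matrix_vector_mult_distribs inner_add_right algebra_simps)
  have "g q *v christoffel g q v w = (\<chi> k. (1/2) * (w \<bullet> (fderiv g q v *v axis k 1)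
      + v \<bullet> (fderiv g q w *v axis k 1) - v \<bullet> (fderiv g q (axis k 1) *v w)))"
    unfolding christoffel_def by (simp add: matrix_vector_mul_assoc g_matrix_inv)
  then show ?thesis using inner_vec_lambda_linear[OF lin, of z] by simp
qed

lemma christoffel_sym: "christoffel g q v w = christoffel g q w v"
  by (rule g_inner_eqI[OF q]) (simp add: christoffel_koszul fderiv_g_sym[OF q, of v _ w] algebra_simps)

lemma christoffel_zero_right: "christoffel g q v 0 = 0"
  by (rule g_inner_eqI[OF q]) (simp add: christoffel_koszul fderiv_linear_simps[OF q])

text \<open>The classical formula \<open>\<nabla>\<^sub>v \<xi> = - \<phi> v - \<phi> h v\<close>, from the Koszul formula: twice its
  \<open>g\<close>-pairing with \<open>z\<close> is \<open>(L\<^sub>\<xi> g)(v, z) + d\<eta>(v, z)\<close>.\<close>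

lemma nabla_xi_eq: "fderiv xi q v + christoffel g q v (xi q) = - (phi q *v v) - phi q *v (h q *v v)"
proof (rule g_inner_eqI[OF q])
  fix z
  have g_xi_deriv: "u \<bullet> (g q *v fderiv xi q k + fderiv g q k *v xi q) = fderiv eta q k \<bullet> u" for u k
  proof -
    note D = has_derivative_diff[OF
        has_derivative_inner[OF has_derivative_const[of u]
          has_derivative_matrix_vector_mult[OF has_derivative_g[OF q] has_derivative_xi[OF q]]]
        has_derivative_inner[OF has_derivative_eta[OF q] has_derivative_const[of u]]]
    show ?thesis using derivative_of_identity[OF q _ D, of 0 k] g_xi by simp
  qed
  have "2 * (z \<bullet> (g q *v (fderiv xi q v + christoffel g q v (xi q))))
      = lie_metric q v z + d_form eta q v z"
    unfolding lie_metric_def d_form_def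
    using g_xi_deriv[of z v] g_xi_deriv[of v z] g_sym[OF q, of "fderiv xi q v" z] fderiv_g_sym[OF q, of z v "xi q"]
      christoffel_koszul[of z v "xi q"]
    by (simp add: matrix_vector_mult_distribs inner_add_right inner_add_left algebra_simps)
  also have "\<dots> = 2 * (z \<bullet> (g q *v (- (phi q *v v) - phi q *v (h q *v v))))"
  proof -
    have "lie_metric q v z = - 2 * (z \<bullet> (g q *v (phi q *v (h q *v v))))"
      using lie_metric_sym[of v z] lie_metric_eq[of z v] by simp
    moreover have "d_form eta q v z = - 2 * (z \<bullet> (g q *v (phi q *v v)))"
      using deta_eq[OF q, of z v] unfolding d_form_def by simp
    ultimately show ?thesis by (simp add: matrix_vector_mult_distribs inner_diff_right)
  qed
  finally show "z \<bullet> (g q *v (fderiv xi q v + christoffel g q v (xi q)))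
      = z \<bullet> (g q *v (- (phi q *v v) - phi q *v (h q *v v)))"
    by simp
qed

end

abbreviation lie_h where "lie_h q \<equiv> lie_tensor xi (hten xi phi) q"

definition nabla_xi_matrix :: "real^'n \<Rightarrow> real^'n^'n" where
  "nabla_xi_matrix q = - (phi q + phi q ** h q)"

lemma differentiable_nabla_xi_matrix: "q \<in> U \<Longrightarrow> nabla_xi_matrix differentiable (at q)"
  unfolding nabla_xi_matrix_def[abs_def]
  by (intro differentiable_minus differentiable_add differentiable_matrix_mult differentiable_phi differentiable_h)

lemma nabla_xi_matrix_apply: "nabla_xi_matrix q *v v = - (phi q *v v) - phi q *v (h q *v v)"
  unfolding nabla_xi_matrix_def by (simp add: matrix_vector_mult_distribs)

lemma nabla_const_xi: "q \<in> U \<Longrightarrow> nabla g (\<lambda>_. v) xi q = nabla_xi_matrix q *v v"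
  unfolding nabla_def nabla_xi_matrix_apply using nabla_xi_eq by simp

lemma nabla_xi_xi: "q \<in> U \<Longrightarrow> nabla g xi xi q = 0"
  unfolding nabla_def using nabla_xi_eq[of q "xi q"] by (simp add: phi_xi h_xi)

context
  fixes q assumes q: "q \<in> U"
begin

text \<open>Since \<open>\<nabla>\<^sub>\<xi> \<xi> = 0\<close> and \<open>\<nabla>\<^sub>v \<xi> = A v\<close> with \<open>A = nabla_xi_matrix\<close>, the Jacobi operator
  \<open>R(\<cdot>, \<xi>) \<xi>\<close> is \<open>- L\<^sub>\<xi> A - A\<^sup>2\<close>.\<close>

lemma curv_const_xi_xi:
  "curv g (\<lambda>_. v) xi xi q = - (lie_tensor xi nabla_xi_matrix q *v v) - nabla_xi_matrix q *v (nabla_xi_matrix q *v v)"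
proof -
  let ?A = nabla_xi_matrix
  have "nabla g (\<lambda>_. v) (nabla g xi xi) q = 0"
  proof -
    have "fderiv (nabla g xi xi) q = (\<lambda>_. 0)"
      using fderiv_transform_open[OF open_U q, of "nabla g xi xi" "\<lambda>_. 0"] nabla_xi_xi by simp
    then show ?thesis unfolding nabla_def[of g "\<lambda>_. v" "nabla g xi xi"]
      using nabla_xi_xi[OF q] christoffel_zero_right[OF q] by simp
  qed
  moreover have "nabla g xi (nabla g (\<lambda>_. v) xi) q
      = fderiv ?A q (xi q) *v v + ?A q *v (?A q *v v) - fderiv xi q (?A q *v v)"
  proof -
    have A': "(?A has_derivative fderiv ?A q) (at q)"
      using differentiable_nabla_xi_matrix[OF q] frechet_derivative_works by blast
    have "fderiv (nabla g (\<lambda>_. v) xi) q = (\<lambda>k. ?A q *v 0 + fderiv ?A q k *v v)"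
      using fderiv_transform_open[OF open_U q _ has_derivative_matrix_vector_mult[OF A' has_derivative_const[of v]]]
        nabla_const_xi by blast
    moreover have "christoffel g q (?A q *v v) (xi q) = ?A q *v (?A q *v v) - fderiv xi q (?A q *v v)"
      using nabla_xi_eq[OF q, of "?A q *v v"] nabla_xi_matrix_apply[of q "?A q *v v"]
      by (metis add_diff_cancel_left')
    ultimately show ?thesis
      unfolding nabla_def[of g xi "nabla g (\<lambda>_. v) xi"] using nabla_const_xi[OF q] christoffel_sym[OF q] by simp
  qed
  moreover have "nabla g (lie_bracket (\<lambda>_. v) xi) xi q = ?A q *v fderiv xi q v"
    unfolding nabla_def lie_bracket_def using nabla_xi_eq[OF q, of "fderiv xi q v"] nabla_xi_matrix_apply by simp
  ultimately show ?thesis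
    unfolding curv_def lie_tensor_apply[OF smooth_xi q] by (simp add: algebra_simps)
qed

lemma lie_nabla_xi_matrix: "lie_tensor xi nabla_xi_matrix q = - (2 *\<^sub>R h q + (2 *\<^sub>R h q) ** h q + phi q ** lie_h q)"
proof -
  note phi' = differentiable_phi[OF q] and phi_h' = differentiable_matrix_mult[OF differentiable_phi[OF q] differentiable_h[OF q]]
  have "lie_tensor xi nabla_xi_matrix q = - (lie_tensor xi phi q + lie_tensor xi (\<lambda>y. phi y ** h y) q)"
    unfolding nabla_xi_matrix_def[abs_def] lie_tensor_minus[OF differentiable_add[OF phi' phi_h']]
      lie_tensor_add[OF phi' phi_h'] ..
  then show ?thesis
    using lie_tensor_matrix_mult[OF phi' differentiable_h[OF q], of xi] by (simp add: lie_phi algebra_simps)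
qed

lemma eta_lie_h: "eta q \<bullet> (lie_h q *v v) = 0"
proof -
  have h': "(hten xi phi has_derivative fderiv (hten xi phi) q) (at q)"
    using differentiable_h[OF q] frechet_derivative_works by blast
  note D = has_derivative_inner[OF has_derivative_eta[OF q] has_derivative_matrix_vector_mult[OF h' has_derivative_const[of v]]]
  have "eta q \<bullet> (h q *v 0 + fderiv (hten xi phi) q (xi q) *v v) + fderiv eta q (xi q) \<bullet> (h q *v v) = 0"
    using derivative_of_identity[OF q _ D, of 0 "xi q"] eta_h by blast
  then have "eta q \<bullet> (lie_h q *v v) = - (fderiv eta q (xi q) \<bullet> (h q *v v) + eta q \<bullet> fderiv xi q (h q *v v))"
    unfolding lie_tensor_apply[OF smooth_xi q] by (simp add: inner_add_right inner_diff_right eta_h[OF q])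
  then show ?thesis by (simp add: lie_eta_zero[OF q])
qed

lemma phi_phi_lie_h: "phi q *v (phi q *v (lie_h q *v v)) = - (lie_h q *v v)"
  by (simp add: phi_phi[OF q] eta_lie_h)

text \<open>Lie derivative of the anticommutation \<open>\<phi> h + h \<phi> = 0\<close>.\<close>

lemma lie_h_phi_anticomm:
  "lie_h q *v (phi q *v v) + phi q *v (lie_h q *v v) + 4 *\<^sub>R (h q *v (h q *v v)) = 0"
proof -
  note phi' = differentiable_phi[OF q] and h' = differentiable_h[OF q]
  have "lie_tensor xi (\<lambda>y. phi y ** h y + h y ** phi y) q = 0"
  proof (rule lie_tensor_vanishing_on_open[OF open_U q])
    show "phi y ** h y + h y ** phi y = 0" if "y \<in> U" for y
      unfolding matrix_eq using phi_h_anticomm[OF that] by (simp add: matrix_vector_mult_distribs)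
  qed
  then have "(lie_tensor xi phi q ** h q + phi q ** lie_h q + (lie_h q ** phi q + h q ** lie_tensor xi phi q)) *v v = 0"
    by (simp add: lie_tensor_add[OF differentiable_matrix_mult[OF phi' h'] differentiable_matrix_mult[OF h' phi']]
        lie_tensor_matrix_mult[OF phi' h'] lie_tensor_matrix_mult[OF h' phi'])
  then show ?thesis unfolding lie_phi by (simp add: matrix_vector_mult_distribs algebra_simps)
qed

lemma nabla_xi_matrix_squared:
  "nabla_xi_matrix q *v (nabla_xi_matrix q *v v) = phi q *v (phi q *v v) + h q *v (h q *v v)"
  by (simp add: nabla_xi_matrix_apply matrix_vector_mult_distribs phi_phi_h[OF q] phi_h_phi[OF q])

end

end

section \<open>Weak \<open>(\<kappa>, \<mu>)\<close> spaces\<close>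

locale weak_kappa_mu_space = contact_metric U eta xi phi g
  for U :: "(real^'n) set" and eta xi :: "real^'n \<Rightarrow> real^'n" and phi g :: "real^'n \<Rightarrow> real^'n^'n" +
  fixes \<kappa> \<mu> :: real
  assumes weak_kappa_mu: "weak_kappa_mu U eta xi phi g \<kappa> \<mu>"
begin

context
  fixes q assumes q: "q \<in> U"
begin

lemma kappa_mu_jacobi_eq:
  "\<kappa> *\<^sub>R (v - (eta q \<bullet> v) *\<^sub>R xi q) + \<mu> *\<^sub>R (h q *v v)
     = 2 *\<^sub>R (h q *v v) + 2 *\<^sub>R (h q *v (h q *v v)) + phi q *v (lie_h q *v v)
       - nabla_xi_matrix q *v (nabla_xi_matrix q *v v)"
proof -
  have "curv g (\<lambda>_. v) xi xi q = \<kappa> *\<^sub>R (v - (eta q \<bullet> v) *\<^sub>R xi q) + \<mu> *\<^sub>R (h q *v v)"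
    using weak_kappa_mu smooth_on_const[of U v] q unfolding weak_kappa_mu_def by auto
  moreover have "curv g (\<lambda>_. v) xi xi q = 2 *\<^sub>R (h q *v v) + 2 *\<^sub>R (h q *v (h q *v v))
      + phi q *v (lie_h q *v v) - nabla_xi_matrix q *v (nabla_xi_matrix q *v v)"
    unfolding curv_const_xi_xi[OF q] lie_nabla_xi_matrix[OF q] by (simp add: matrix_vector_mult_distribs)
  ultimately show ?thesis by simp
qed

text \<open>The following identities are linear in the vectors involved; pairing them with an
  arbitrary \<open>c\<close> turns them into polynomial identities, which \<open>algebra\<close> proves.\<close>

lemma phi_lie_h_eq_h_squared:
  "phi q *v (lie_h q *v v) = (1 - \<kappa>) *\<^sub>R (phi q *v (phi q *v v)) + (\<mu> - 2) *\<^sub>R (h q *v v) - h q *v (h q *v v)"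
  (is "?l = ?r")
proof (rule inner_eqI)
  fix c
  have "v - (eta q \<bullet> v) *\<^sub>R xi q = - (phi q *v (phi q *v v))" by (simp add: phi_phi[OF q])
  from this[THEN arg_cong[where f="\<lambda>x. x \<bullet> c"]] kappa_mu_jacobi_eq[of v, THEN arg_cong[where f="\<lambda>x. x \<bullet> c"]]
  show "?l \<bullet> c = ?r \<bullet> c"
    unfolding nabla_xi_matrix_squared[OF q] inner_linear_left by algebra
qed

lemma lie_h_eq_h_squared:
  "lie_h q *v v = (1 - \<kappa>) *\<^sub>R (phi q *v v) - (\<mu> - 2) *\<^sub>R (phi q *v (h q *v v)) + phi q *v (h q *v (h q *v v))"
  (is "?l = ?r")
proof (rule inner_eqI)
  fix c
  have "phi q *v (phi q *v (lie_h q *v v)) = (1 - \<kappa>) *\<^sub>R (phi q *v (phi q *v (phi q *v v)))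
      + (\<mu> - 2) *\<^sub>R (phi q *v (h q *v v)) - phi q *v (h q *v (h q *v v))"
    unfolding phi_lie_h_eq_h_squared by (simp add: matrix_vector_mult_distribs)
  from this[THEN arg_cong[where f="\<lambda>x. x \<bullet> c"]] show "?l \<bullet> c = ?r \<bullet> c"
    unfolding phi_phi_lie_h[OF q] phi_phi_phi[OF q] inner_linear_left by algebra
qed

lemma h_squared: "h q *v (h q *v v) = (\<kappa> - 1) *\<^sub>R (phi q *v (phi q *v v))" (is "?l = ?r")
proof (rule inner_eqI)
  fix c
  have "lie_h q *v (phi q *v v)
      = (1 - \<kappa>) *\<^sub>R (phi q *v (phi q *v v)) - (\<mu> - 2) *\<^sub>R (h q *v v) - h q *v (h q *v v)"
    unfolding lie_h_eq_h_squared[of "phi q *v v"] h_h_phi[OF q] phi_h_phi[OF q] phi_phi_h[OF q] by simp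
  from this[THEN arg_cong[where f="\<lambda>x. x \<bullet> c"]]
    lie_h_phi_anticomm[OF q, of v, THEN arg_cong[where f="\<lambda>x. x \<bullet> c"]]
    phi_lie_h_eq_h_squared[of v, THEN arg_cong[where f="\<lambda>x. x \<bullet> c"]]
  show "?l \<bullet> c = ?r \<bullet> c"
    unfolding inner_linear_left by algebra
qed

lemma lie_h_eq: "lie_h q *v v = (2 * (1 - \<kappa>)) *\<^sub>R (phi q *v v) + (2 - \<mu>) *\<^sub>R (phi q *v (h q *v v))"
  (is "?l = ?r")
proof (rule inner_eqI)
  fix c
  have "phi q *v (h q *v (h q *v v)) = (1 - \<kappa>) *\<^sub>R (phi q *v v)"
    unfolding h_squared by (simp add: matrix_vector_mult_distribs phi_phi_phi[OF q] algebra_simps)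
  from this[THEN arg_cong[where f="\<lambda>x. x \<bullet> c"]] lie_h_eq_h_squared[of v, THEN arg_cong[where f="\<lambda>x. x \<bullet> c"]]
  show "?l \<bullet> c = ?r \<bullet> c"
    unfolding inner_linear_left by algebra
qed

lemma phi_lie_h_eq:
  "phi q *v (lie_h q *v v) = (2 * (1 - \<kappa>)) *\<^sub>R (phi q *v (phi q *v v)) - (2 - \<mu>) *\<^sub>R (h q *v v)"
  (is "?l = ?r")
proof (rule inner_eqI)
  fix c
  from phi_lie_h_eq_h_squared[of v, THEN arg_cong[where f="\<lambda>x. x \<bullet> c"]] h_squared[of v, THEN arg_cong[where f="\<lambda>x. x \<bullet> c"]]
  show "?l \<bullet> c = ?r \<bullet> c"
    unfolding inner_linear_left by algebra
qed

lemma lie_h_squared: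
  "lie_h q *v (lie_h q *v v) = (4 * (1 - \<kappa>) * (1 - \<kappa> - (1 - \<mu>/2)^2)) *\<^sub>R (phi q *v (phi q *v v))"
  (is "?l = ?r")
proof (rule inner_eqI)
  fix c
  have "phi q *v (h q *v (lie_h q *v v)) = - (h q *v (phi q *v (lie_h q *v v)))"
    using h_phi[OF q, of "lie_h q *v v"] by simp
  also have "\<dots> = (2 * (1 - \<kappa>)) *\<^sub>R (h q *v v) + ((2 - \<mu>) * (\<kappa> - 1)) *\<^sub>R (phi q *v (phi q *v v))"
    unfolding phi_lie_h_eq by (simp add: matrix_vector_mult_distribs h_phi_phi[OF q] h_squared)
  finally have "phi q *v (h q *v (lie_h q *v v)) = \<dots>" .
  from this[THEN arg_cong[where f="\<lambda>x. x \<bullet> c"]]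
    lie_h_eq[of "lie_h q *v v", THEN arg_cong[where f="\<lambda>x. x \<bullet> c"]]
    phi_lie_h_eq[of v, THEN arg_cong[where f="\<lambda>x. x \<bullet> c"]]
  show "?l \<bullet> c = ?r \<bullet> c"
    unfolding inner_linear_left by algebra
qed

lemma h_squared_phi_lie_h: "2 *\<^sub>R (h q *v (h q *v v)) + phi q *v (lie_h q *v v) = - ((2 - \<mu>) *\<^sub>R (h q *v v))"
  (is "?l = ?r")
proof (rule inner_eqI)
  fix c
  from phi_lie_h_eq[of v, THEN arg_cong[where f="\<lambda>x. x \<bullet> c"]] h_squared[of v, THEN arg_cong[where f="\<lambda>x. x \<bullet> c"]]
  show "?l \<bullet> c = ?r \<bullet> c"
    unfolding inner_linear_left by algebra
qed

end

text \<open>Non-K-contactness forces \<open>\<kappa> < 1\<close>: \<open>g(h v, h v) = g(v, h\<^sup>2 v) = (1 - \<kappa>) g(\<phi> v, \<phi> v)\<close>.\<close>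

lemma kappa_less_one:
  assumes "\<exists>p\<in>U. h p \<noteq> 0"
  shows "\<kappa> < 1"
proof -
  obtain p v where p: "p \<in> U" and v: "h p *v v \<noteq> 0"
    using assms unfolding matrix_eq by auto
  have "(h p *v v) \<bullet> (g p *v (h p *v v)) = v \<bullet> (g p *v (h p *v (h p *v v)))"
    by (rule h_sym[OF p])
  also have "\<dots> = (1 - \<kappa>) * ((phi p *v v) \<bullet> (g p *v (phi p *v v)))"
    using phi_skew[OF p, of v "phi p *v v"] by (simp add: h_squared[OF p] matrix_vector_mult_scaleR algebra_simps)
  finally have "0 < (1 - \<kappa>) * ((phi p *v v) \<bullet> (g p *v (phi p *v v)))"
    using g_pos[OF p v] by simp
  moreover have "0 \<le> (phi p *v v) \<bullet> (g p *v (phi p *v v))"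
    using g_pos[OF p, of "phi p *v v"] by (cases "phi p *v v = 0") auto
  ultimately show ?thesis by (simp add: zero_less_mult_iff)
qed

text \<open>The tensor that the statement normalises to \<open>\<phi>\<^sub>1\<close>.\<close>

definition psi :: "real^'n \<Rightarrow> real^'n^'n" where
  "psi q = (2 - \<mu>) *\<^sub>R (phi q ** h q) + (2 * (1 - \<kappa>)) *\<^sub>R phi q"

lemma differentiable_psi: "q \<in> U \<Longrightarrow> psi differentiable (at q)"
  unfolding psi_def[abs_def]
  by (intro differentiable_add differentiable_scaleR differentiable_const differentiable_matrix_mult
      differentiable_phi differentiable_h)

lemma psi_apply: "q \<in> U \<Longrightarrow> psi q *v v = lie_h q *v v"
  unfolding psi_def lie_h_eq by (simp add: matrix_vector_mult_distribs add.commute)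

lemma psi_squared:
  "q \<in> U \<Longrightarrow> psi q *v (psi q *v v) = (4 * (1 - \<kappa>) * (1 - \<kappa> - (1 - \<mu>/2)^2)) *\<^sub>R (phi q *v (phi q *v v))"
  by (simp add: psi_apply lie_h_squared)

lemma lie_psi: "q \<in> U \<Longrightarrow> lie_tensor xi psi q = (4 * (1 - \<kappa> - (1 - \<mu>/2)^2)) *\<^sub>R h q"
proof -
  assume q: "q \<in> U"
  note phi' = differentiable_phi[OF q] and h' = differentiable_h[OF q]
  note phi_h' = differentiable_matrix_mult[OF phi' h']
  have lie: "lie_tensor xi psi q = (2 - \<mu>) *\<^sub>R (lie_tensor xi phi q ** h q + phi q ** lie_h q)
      + (2 * (1 - \<kappa>)) *\<^sub>R lie_tensor xi phi q"
    unfolding psi_def[abs_def]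
      lie_tensor_add[OF differentiable_scaleR[OF differentiable_const phi_h'] differentiable_scaleR[OF differentiable_const phi']]
      lie_tensor_scaleR[OF phi_h'] lie_tensor_scaleR[OF phi'] lie_tensor_matrix_mult[OF phi' h'] ..
  have coeff: "4 * (1 - \<kappa>) - (2 - \<mu>) * (2 - \<mu>) = 4 * (1 - \<kappa> - (1 - \<mu>/2)^2)"
    by (simp add: power2_eq_square algebra_simps)
  show ?thesis
  proof (subst matrix_eq, rule allI)
    fix v
    have "lie_tensor xi psi q *v v
        = (2 - \<mu>) *\<^sub>R (2 *\<^sub>R (h q *v (h q *v v)) + phi q *v (lie_h q *v v)) + (4 * (1 - \<kappa>)) *\<^sub>R (h q *v v)"
      unfolding lie lie_phi by (simp add: matrix_vector_mult_distribs)
    also have "\<dots> = (4 * (1 - \<kappa>) - (2 - \<mu>) * (2 - \<mu>)) *\<^sub>R (h q *v v)" (is "?l = ?r")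
    proof (rule inner_eqI)
      fix c
      from h_squared_phi_lie_h[OF q, of v, THEN arg_cong[where f="\<lambda>x. x \<bullet> c"]] show "?l \<bullet> c = ?r \<bullet> c"
        unfolding inner_linear_left by algebra
    qed
    finally show "lie_tensor xi psi q *v v = (4 * (1 - \<kappa> - (1 - \<mu>/2)^2)) *\<^sub>R h q *v v"
      unfolding coeff by (simp add: scaleR_matrix_vector_assoc[symmetric])
  qed
qed

end

lemma boeckx_normalization:
  fixes \<kappa> \<mu> :: real
  assumes "\<kappa> < 1" "\<bar>(1 - \<mu>/2) / sqrt (1 - \<kappa>)\<bar> < 1"
  defines "c \<equiv> (1 / sqrt (1 - \<kappa> - (1 - \<mu>/2)^2)) * (1 / (2 * sqrt (1 - \<kappa>)))"
  shows "(c * c) * (4 * (1 - \<kappa>) * (1 - \<kappa> - (1 - \<mu>/2)^2)) = 1"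
    and "(1/2) * (c * (4 * (1 - \<kappa> - (1 - \<mu>/2)^2))) = sqrt (1 - ((1 - \<mu>/2) / sqrt (1 - \<kappa>))^2)"
proof -
  define k m where "k = 1 - \<kappa>" and "m = 1 - \<mu>/2"
  have "k > 0" using assms(1) unfolding k_def by simp
  have "\<bar>m\<bar> < sqrt k" using assms(2) \<open>k > 0\<close> unfolding k_def m_def by (simp add: abs_divide divide_less_eq)
  then have "\<bar>m\<bar>^2 < (sqrt k)^2" by (intro power_strict_mono) auto
  then have "k - m^2 > 0" using \<open>k > 0\<close> by simp
  define s t where "s = sqrt (k - m^2)" and "t = sqrt k"
  have "s > 0" "t > 0" "k - m^2 = s^2" "k = t^2"
    unfolding s_def t_def using \<open>k > 0\<close> \<open>k - m^2 > 0\<close> by simp_all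
  have c: "c = 1 / (2 * s * t)" unfolding c_def s_def t_def k_def m_def by simp
  have "4 * k * (k - m^2) = 4 * t^2 * s^2" using \<open>k - m^2 = s^2\<close> \<open>k = t^2\<close> by simp
  then show "(c * c) * (4 * (1 - \<kappa>) * (1 - \<kappa> - (1 - \<mu>/2)^2)) = 1"
    unfolding k_def[symmetric] m_def[symmetric] c
    using \<open>s > 0\<close> \<open>t > 0\<close> by (simp add: field_simps power2_eq_square)
  have "1 - (m / t)^2 = (t^2 - m^2) / t^2" using \<open>t > 0\<close> by (simp add: power_divide field_simps)
  also have "\<dots> = (s / t)^2" using \<open>k - m^2 = s^2\<close> \<open>k = t^2\<close> by (simp add: power_divide)
  finally have "sqrt (1 - (m / t)^2) = s / t" using \<open>s > 0\<close> \<open>t > 0\<close> by simp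
  then show "(1/2) * (c * (4 * (1 - \<kappa> - (1 - \<mu>/2)^2))) = sqrt (1 - ((1 - \<mu>/2) / sqrt (1 - \<kappa>))^2)"
    unfolding k_def[symmetric] m_def[symmetric] t_def[symmetric] \<open>k - m^2 = s^2\<close> c
    using \<open>s > 0\<close> \<open>t > 0\<close> by (simp add: power2_eq_square)
qed

theorem proposition5:
  fixes U :: "(real^'n) set"
    and eta xi :: "real^'n \<Rightarrow> real^'n"
    and phi g :: "real^'n \<Rightarrow> real^'n^'n"
    and \<kappa> \<mu> :: real
  assumes cm: "contact_metric_on U eta xi phi g"
    and nonK: "\<exists>p\<in>U. hten xi phi p \<noteq> 0"
    and km: "weak_kappa_mu U eta xi phi g \<kappa> \<mu>"
    and boeckx: "\<bar>(1 - \<mu>/2) / sqrt (1 - \<kappa>)\<bar> < 1"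
  defines "I \<equiv> (1 - \<mu>/2) / sqrt (1 - \<kappa>)"
    and "phi1 \<equiv> (\<lambda>p. ((1 / sqrt (1 - \<kappa> - (1 - \<mu>/2)^2)) * (1 / (2 * sqrt (1 - \<kappa>))))
                     *\<^sub>R ((2 - \<mu>) *\<^sub>R (phi p ** hten xi phi p) + (2 * (1 - \<kappa>)) *\<^sub>R phi p))"
  shows "(\<forall>p\<in>U. \<forall>v. phi1 p *v (phi1 p *v v) = - v + (eta p \<bullet> v) *\<^sub>R xi p)
       \<and> (\<forall>p\<in>U. (1/2) *\<^sub>R lie_tensor xi phi1 p = sqrt (1 - I^2) *\<^sub>R hten xi phi p)"
proof -
  interpret weak_kappa_mu_space U eta xi phi g \<kappa> \<mu>
    using cm km by unfold_locales
  define c where "c = (1 / sqrt (1 - \<kappa> - (1 - \<mu>/2)^2)) * (1 / (2 * sqrt (1 - \<kappa>)))"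
  note normalization = boeckx_normalization[OF kappa_less_one[OF nonK] boeckx, folded c_def I_def]
  have phi1: "phi1 = (\<lambda>p. c *\<^sub>R psi p)" unfolding phi1_def c_def psi_def ..
  have "phi1 p *v (phi1 p *v v) = - v + (eta p \<bullet> v) *\<^sub>R xi p" if "p \<in> U" for p v
  proof -
    have "phi1 p *v (phi1 p *v v) = (c * c) *\<^sub>R (psi p *v (psi p *v v))"
      by (simp add: phi1 scaleR_matrix_vector_assoc[symmetric] matrix_vector_mult_scaleR)
    also have "\<dots> = phi p *v (phi p *v v)"
      using normalization(1) by (simp add: psi_squared[OF that] mult.assoc[symmetric])
    finally show ?thesis using phi_phi[OF that] by simp
  qed
  moreover have "(1/2) *\<^sub>R lie_tensor xi phi1 p = sqrt (1 - I^2) *\<^sub>R hten xi phi p" if "p \<in> U" for p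
    using normalization(2) by (simp add: phi1 lie_tensor_scaleR[OF differentiable_psi[OF that]] lie_psi[OF that])
  ultimately show ?thesis by blast
qed

end
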